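(* Let $a<b$ be real numbers and let $\tilde f:[a,b]^2\to\mathbb{C}$ be continuous. Define iterated kernels $\tilde f^{(1)}:=\tilde f$ and, for $n\ge 2$ and $a\le y\le x\le b$, $$\tilde f^{(n)}(x,y):=\int_y^x \tilde f(x,\zeta)\,\tilde f^{(n-1)}(\zeta,y)\,d\zeta ,$$ and set $\tilde r(x,y):=\sum_{n=1}^{\infty}\tilde f^{(n)}(x,y)$ for $a\le y\le x\le b$ (this series converges absolutely and uniformly). For each integer $N\ge1$ put $\Delta z:=(b-a)/N$, $z_k:=a+k\,\Delta z$ for $k=0,\dots,N$, and let $\mathsf F^{(N)}$ be the $(N+1)\times(N+1)$ lower triangular matrix with entries $\mathsf F^{(N)}_{i,k}=\tilde f(z_i,z_k)$ if $i\ge k$ and $0$ if $i<k$. Then, for all $N$ large enough, $\mathsf{Id}-\Delta z\,\mathsf F^{(N)}$ is invertible, and for every $a\le y< x\le b$ and every choice of indices $0\le j_N< i_N\le N$ with $z_{i_N}\to x$ and $z_{j_N}\to y$ as $N\to\infty$, $$\lim_{N\to\infty}\frac{1}{\Delta z}\Big(\mathsf{Id}-\Delta z\,\mathsf F^{(N)}\Big)^{-1}_{i_N,j_N}=\tilde r(x,y).$$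
   Context: Here $\tilde r(x,y)$ is the smooth (Heaviside) part of the Volterra resolvent $(1_\ast-f)^{\ast-1}=\sum_{n\ge0}f^{\ast n}$ of the kernel $f(x,y)=\tilde f(x,y)\Theta(x-y)$, where $\Theta$ is the Heaviside step function and $\ast$ is the Volterra composition $(f\ast l)(x,y)=\int_y^x \tilde f(x,\zeta)\tilde l(\zeta,y)\,d\zeta\,\Theta(x-y)$, with unit $1_\ast=\delta(x-y)$; thus $(1_\ast-f)^{\ast-1}(x,y)=\delta(x-y)+\tilde r(x,y)\Theta(x-y)$. $\mathsf{Id}$ denotes the identity matrix. *)

theory Defs
  imports "HOL-Analysis.Analysis" "Jordan_Normal_Form.Matrix"
begin

text \<open>Iterated kernels: kiter f 0 = f (the paper's f^(1)), kiter f (Suc n) = f^(n+2).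
  For y \<le> x, kiter f (Suc n) x y = integral over [y,x] of f x t * kiter f n t y.\<close>
fun kiter :: "(real \<Rightarrow> real \<Rightarrow> complex) \<Rightarrow> nat \<Rightarrow> real \<Rightarrow> real \<Rightarrow> complex" where
  "kiter f 0 x y = f x y"
| "kiter f (Suc n) x y = integral {y..x} (\<lambda>t. f x t * kiter f n t y)"

definition resolvent_kernel :: "(real \<Rightarrow> real \<Rightarrow> complex) \<Rightarrow> real \<Rightarrow> real \<Rightarrow> complex" where
  "resolvent_kernel f x y = (\<Sum>n. kiter f n x y)"

definition dz :: "real \<Rightarrow> real \<Rightarrow> nat \<Rightarrow> real" where
  "dz a b N = (b - a) / real N"

definition grid :: "real \<Rightarrow> real \<Rightarrow> nat \<Rightarrow> nat \<Rightarrow> real" where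
  "grid a b N k = a + real k * dz a b N"

definition Fmat :: "real \<Rightarrow> real \<Rightarrow> (real \<Rightarrow> real \<Rightarrow> complex) \<Rightarrow> nat \<Rightarrow> complex mat" where
  "Fmat a b f N = mat (N+1) (N+1) (\<lambda>(i,k). if k \<le> i then f (grid a b N i) (grid a b N k) else 0)"

definition IdMinusF :: "real \<Rightarrow> real \<Rightarrow> (real \<Rightarrow> real \<Rightarrow> complex) \<Rightarrow> nat \<Rightarrow> complex mat" where
  "IdMinusF a b f N = 1\<^sub>m (N+1) - complex_of_real (dz a b N) \<cdot>\<^sub>m Fmat a b f N"

definition mat_inv :: "complex mat \<Rightarrow> complex mat" where
  "mat_inv A = (THE B. B \<in> carrier_mat (dim_row A) (dim_row A) \<and> inverts_mat A B \<and> inverts_mat B A)"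

end

theory Submission
  imports Defs "Jordan_Normal_Form.Determinant"
begin

(* The iterated kernels satisfy |f^(n+1)(x,y)| <= M^(n+1) (x-y)^n / n!, so the Neumann series
  converges uniformly on the triangle y <= x, its sum r is continuous, and it solves the
  resolvent equation r(x,y) = f(x,y) + int_y^x f(x,t) r(t,y) dt.
  The matrix Id - dz F is lower triangular with diagonal entries 1 - dz f(z_k,z_k), hence
  invertible once dz M <= 1/2, and forward substitution shows that column j of its inverse,
  divided by dz, obeys the right-endpoint rectangle rule for the resolvent equation.  The
  values r(z_i,z_j) obey the same recursion up to the quadrature defect, which tends to 0
  uniformly by uniform continuity.  A discrete Gronwall inequality turns this into uniform
  convergence of the scaled inverse to r on the grid; continuity of r gives the limit along
  the grid points converging to (x,y). *)

definition lower_triangle :: "real \<Rightarrow> real \<Rightarrow> (real \<times> real) set" where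
  "lower_triangle a b = {(x, y). a \<le> y \<and> y \<le> x \<and> x \<le> b}"

lemma mem_lower_triangle [simp]:
  "(x, y) \<in> lower_triangle a b \<longleftrightarrow> a \<le> y \<and> y \<le> x \<and> x \<le> b"
  by (simp add: lower_triangle_def)

lemma compact_lower_triangle: "compact (lower_triangle a b)"
proof -
  have "lower_triangle a b = ({a..b} \<times> {a..b}) \<inter> {p. snd p \<le> fst p}"
    by auto
  then show ?thesis
    by (simp only:) (intro compact_Int_closed compact_Times compact_Icc closed_Collect_le continuous_intros)
qed

lemma integral_Icc_eq_integral_unit_interval:
  fixes g :: "real \<Rightarrow> 'a::euclidean_space"
  assumes "y \<le> x" and "continuous_on {y..x} g"
  shows "integral {y..x} g = integral {0..1} (\<lambda>s. (x - y) *\<^sub>R g (y + s * (x - y)))"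
proof -
  have "(\<lambda>s. y + s * (x - y)) ` {0..1} \<subseteq> {y..x}"
  proof
    fix z assume "z \<in> (\<lambda>s. y + s * (x - y)) ` {0..1}"
    then obtain s where s: "0 \<le> s" "s \<le> 1" and z: "z = y + s * (x - y)" by auto
    have "s * (x - y) \<le> 1 * (x - y)" using s assms(1) by (intro mult_right_mono) auto
    then show "z \<in> {y..x}" using s assms(1) z by auto
  qed
  then have "((\<lambda>s. (x - y) *\<^sub>R g (y + s * (x - y))) has_integral
      integral {y + 0 * (x - y) .. y + 1 * (x - y)} g) {0..1}"
    by (intro has_integral_substitution[where c = y and d = x])
       (use assms in \<open>auto intro!: derivative_eq_intros\<close>)
  then have "((\<lambda>s. (x - y) *\<^sub>R g (y + s * (x - y))) has_integral integral {y..x} g) {0..1}"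
    by simp
  then show ?thesis by (rule integral_unique[symmetric])
qed

lemma has_integral_power_shift:
  fixes x y :: real
  assumes "y \<le> x"
  shows "((\<lambda>t. (t - y) ^ n) has_integral (x - y) ^ Suc n / Suc n) {y..x}"
proof -
  have "((\<lambda>t. (t - y) ^ Suc n / Suc n) has_real_derivative (t - y) ^ n) (at t within {y..x})" for t
  proof -
    have "((\<lambda>t. t - y) has_real_derivative 1) (at t within {y..x})"
      by (auto intro!: derivative_eq_intros)
    then have "((\<lambda>t. (t - y) ^ Suc n / Suc n) has_real_derivative
        (1 + real n) * (1 * (t - y) ^ n) / Suc n) (at t within {y..x})"
      by (rule DERIV_cdivide[OF DERIV_power_Suc])
    then show ?thesis by simp
  qed
  then have "((\<lambda>t. (t - y) ^ n) has_integral
      (\<lambda>t. (t - y) ^ Suc n / Suc n) x - (\<lambda>t. (t - y) ^ Suc n / Suc n) y) {y..x}"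
    by (intro fundamental_theorem_of_calculus assms)
       (simp add: has_real_derivative_iff_has_vector_derivative)
  then show ?thesis by simp
qed

locale bounded_continuous_kernel =
  fixes a b :: real and f :: "real \<Rightarrow> real \<Rightarrow> complex" and M :: real
  assumes continuous_kernel: "continuous_on ({a..b} \<times> {a..b}) (\<lambda>(x, y). f x y)"
    and bound_pos: "M > 0"
    and norm_kernel_le: "\<And>x y. x \<in> {a..b} \<Longrightarrow> y \<in> {a..b} \<Longrightarrow> norm (f x y) \<le> M"
begin

lemma continuous_on_Volterra_integrand:
  assumes k: "continuous_on (lower_triangle a b) (\<lambda>(x, y). k x y)"
    and xy: "(x, y) \<in> lower_triangle a b"
  shows "continuous_on {y..x} (\<lambda>t. f x t * k t y)"
proof -
  have "(\<lambda>t. (x, t)) ` {y..x} \<subseteq> {a..b} \<times> {a..b}" "(\<lambda>t. (t, y)) ` {y..x} \<subseteq> lower_triangle a b"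
    using xy by auto
  from continuous_on_compose2[OF continuous_kernel continuous_on_Pair[OF continuous_on_const continuous_on_id] this(1)]
    continuous_on_compose2[OF k continuous_on_Pair[OF continuous_on_id continuous_on_const] this(2)]
  have "continuous_on {y..x} (\<lambda>t. f x t)" "continuous_on {y..x} (\<lambda>t. k t y)"
    by simp_all
  then show ?thesis by (intro continuous_intros)
qed

text \<open>After substituting t = y + s (x - y) the integral runs over the fixed interval [0,1],
  so continuity in (x,y) follows from joint continuity of the integrand.\<close>
lemma continuous_on_Volterra_integral:
  assumes k: "continuous_on (lower_triangle a b) (\<lambda>(x, y). k x y)"
  shows "continuous_on (lower_triangle a b) (\<lambda>(x, y). integral {y..x} (\<lambda>t. f x t * k t y))"
proof -
  let ?T = "lower_triangle a b"
  define \<sigma> where "\<sigma> p s = snd p + s * (fst p - snd p)" for p :: "real \<times> real" and s :: real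
  have \<sigma>_mem: "snd p \<le> \<sigma> p s \<and> \<sigma> p s \<le> fst p" if "p \<in> ?T" "s \<in> {0..1}" for p s
  proof -
    obtain x y where p: "p = (x, y)" by (cases p)
    have "s * (x - y) \<le> 1 * (x - y)" using that p by (intro mult_right_mono) auto
    moreover have "0 \<le> s * (x - y)" using that p by auto
    ultimately show ?thesis by (simp add: \<sigma>_def p)
  qed
  have sub_square: "(\<lambda>q. (fst (fst q), \<sigma> (fst q) (snd q))) ` (?T \<times> cbox 0 1) \<subseteq> {a..b} \<times> {a..b}"
  proof
    fix w assume "w \<in> (\<lambda>q. (fst (fst q), \<sigma> (fst q) (snd q))) ` (?T \<times> cbox 0 1)"
    then obtain p s where "w = (fst p, \<sigma> p s)" "p \<in> ?T" "s \<in> {0..1}" by auto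
    with \<sigma>_mem[of p s] show "w \<in> {a..b} \<times> {a..b}" by (cases p) auto
  qed
  have sub_triangle: "(\<lambda>q. (\<sigma> (fst q) (snd q), snd (fst q))) ` (?T \<times> cbox 0 1) \<subseteq> ?T"
  proof
    fix w assume "w \<in> (\<lambda>q. (\<sigma> (fst q) (snd q), snd (fst q))) ` (?T \<times> cbox 0 1)"
    then obtain p s where "w = (\<sigma> p s, snd p)" "p \<in> ?T" "s \<in> {0..1}" by auto
    with \<sigma>_mem[of p s] show "w \<in> ?T" by (cases p) auto
  qed
  have "continuous_on (?T \<times> cbox 0 1) (\<lambda>q. (fst (fst q), \<sigma> (fst q) (snd q)))"
    "continuous_on (?T \<times> cbox 0 1) (\<lambda>q. (\<sigma> (fst q) (snd q), snd (fst q)))"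
    unfolding \<sigma>_def by (intro continuous_intros)+
  from continuous_on_compose2[OF continuous_kernel this(1) sub_square]
    continuous_on_compose2[OF k this(2) sub_triangle]
  have "continuous_on (?T \<times> cbox 0 1) (\<lambda>q. f (fst (fst q)) (\<sigma> (fst q) (snd q)))"
    "continuous_on (?T \<times> cbox 0 1) (\<lambda>q. k (\<sigma> (fst q) (snd q)) (snd (fst q)))"
    by simp_all
  then have "continuous_on (?T \<times> cbox 0 1) (\<lambda>(p, s).
      (fst p - snd p) *\<^sub>R (f (fst p) (\<sigma> p s) * k (\<sigma> p s) (snd p)))"
    unfolding case_prod_beta by (intro continuous_intros)
  then have "continuous_on ?T (\<lambda>p. integral (cbox 0 1) (\<lambda>s.
      (fst p - snd p) *\<^sub>R (f (fst p) (\<sigma> p s) * k (\<sigma> p s) (snd p))))"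
    by (rule integral_continuous_on_param)
  moreover have "integral (cbox 0 1) (\<lambda>s. (fst p - snd p) *\<^sub>R (f (fst p) (\<sigma> p s) * k (\<sigma> p s) (snd p)))
      = (\<lambda>(x, y). integral {y..x} (\<lambda>t. f x t * k t y)) p" if "p \<in> ?T" for p
  proof (cases p)
    case (Pair x y)
    then have "integral {y..x} (\<lambda>t. f x t * k t y)
        = integral {0..1} (\<lambda>s. (x - y) *\<^sub>R (f x (y + s * (x - y)) * k (y + s * (x - y)) y))"
      using that by (intro integral_Icc_eq_integral_unit_interval continuous_on_Volterra_integrand[OF k]) auto
    then show ?thesis by (simp add: Pair \<sigma>_def)
  qed
  ultimately show ?thesis by (rule continuous_on_eq)
qed

lemma continuous_on_kiter: "continuous_on (lower_triangle a b) (\<lambda>(x, y). kiter f n x y)"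
proof (induction n)
  case 0
  have "lower_triangle a b \<subseteq> {a..b} \<times> {a..b}" by auto
  then show ?case using continuous_on_subset[OF continuous_kernel] by simp
next
  case (Suc n)
  then show ?case using continuous_on_Volterra_integral by simp
qed

lemma norm_kiter_le:
  assumes "(x, y) \<in> lower_triangle a b"
  shows "norm (kiter f n x y) \<le> M ^ Suc n * (x - y) ^ n / fact n"
  using assms
proof (induction n arbitrary: x)
  case 0
  then show ?case using norm_kernel_le[of x y] by simp
next
  case (Suc n)
  let ?C = "M ^ Suc (Suc n) / fact n"
  have yx: "y \<le> x" using Suc.prems by simp
  have majorant: "((\<lambda>t. ?C * (t - y) ^ n) has_integral ?C * ((x - y) ^ Suc n / Suc n)) {y..x}"
    by (intro has_integral_mult_right has_integral_power_shift yx)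
  have "norm (kiter f (Suc n) x y) \<le> integral {y..x} (\<lambda>t. ?C * (t - y) ^ n)"
    unfolding kiter.simps
  proof (rule integral_norm_bound_integral)
    show "(\<lambda>t. f x t * kiter f n t y) integrable_on {y..x}"
      by (intro integrable_continuous_interval continuous_on_Volterra_integrand continuous_on_kiter Suc.prems)
    show "(\<lambda>t. ?C * (t - y) ^ n) integrable_on {y..x}" using majorant by blast
  next
    fix t assume t: "t \<in> {y..x}"
    have "norm (f x t * kiter f n t y) \<le> M * (M ^ Suc n * (t - y) ^ n / fact n)"
      unfolding norm_mult using Suc.prems t bound_pos
      by (intro mult_mono norm_kernel_le Suc.IH) auto
    then show "norm (f x t * kiter f n t y) \<le> ?C * (t - y) ^ n" by simp
  qed
  also have "\<dots> = M ^ Suc (Suc n) * (x - y) ^ Suc n / fact (Suc n)"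
    using integral_unique[OF majorant] by (simp add: field_simps del: of_nat_Suc)
  finally show ?case .
qed

lemma norm_kiter_le_exp_majorant:
  assumes "(x, y) \<in> lower_triangle a b"
  shows "norm (kiter f n x y) \<le> M * (M * (b - a)) ^ n / fact n"
proof -
  have "(x - y) ^ n \<le> (b - a) ^ n" using assms by (intro power_mono) auto
  then have "M ^ Suc n * (x - y) ^ n / fact n \<le> M ^ Suc n * (b - a) ^ n / fact n"
    using bound_pos by (intro divide_right_mono mult_left_mono) auto
  then show ?thesis
    using norm_kiter_le[OF assms, of n] by (simp add: power_mult_distrib mult_ac)
qed

lemma summable_exp_majorant: "summable (\<lambda>n. M * (M * (b - a)) ^ n / fact n)"
  using summable_mult[OF summable_exp[of "M * (b - a)"], of M]
  by (simp add: divide_inverse mult_ac)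

lemma summable_kiter:
  assumes "(x, y) \<in> lower_triangle a b"
  shows "summable (\<lambda>n. kiter f n x y)"
  by (rule summable_comparison_test'[OF summable_exp_majorant norm_kiter_le_exp_majorant[OF assms]])

lemma continuous_on_resolvent_kernel:
  "continuous_on (lower_triangle a b) (\<lambda>(x, y). resolvent_kernel f x y)"
proof -
  have "uniform_limit (lower_triangle a b) (\<lambda>n p. \<Sum>i<n. (\<lambda>(x, y). kiter f i x y) p)
      (\<lambda>p. \<Sum>i. (\<lambda>(x, y). kiter f i x y) p) sequentially"
    by (rule Weierstrass_m_test[OF _ summable_exp_majorant])
       (auto intro: norm_kiter_le_exp_majorant)
  then have "continuous_on (lower_triangle a b) (\<lambda>p. \<Sum>i. (\<lambda>(x, y). kiter f i x y) p)"
    by (rule uniform_limit_theorem[rotated])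
       (auto intro!: always_eventually continuous_on_sum continuous_on_kiter)
  then show ?thesis by (simp add: resolvent_kernel_def case_prod_beta)
qed

lemma resolvent_equation:
  assumes xy: "(x, y) \<in> lower_triangle a b"
  shows "resolvent_kernel f x y = f x y + integral {y..x} (\<lambda>t. f x t * resolvent_kernel f t y)"
proof -
  have ty: "(t, y) \<in> lower_triangle a b" if "t \<in> {y..x}" for t using xy that by auto
  have "uniform_limit {y..x} (\<lambda>n t. \<Sum>i<n. f x t * kiter f i t y)
      (\<lambda>t. \<Sum>i. f x t * kiter f i t y) sequentially"
  proof (rule Weierstrass_m_test)
    fix n t assume t: "t \<in> {y..x}"
    show "norm (f x t * kiter f n t y) \<le> M * (M * (M * (b - a)) ^ n / fact n)"
      unfolding norm_mult using xy t bound_pos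
      by (intro mult_mono norm_kernel_le norm_kiter_le_exp_majorant ty) auto
  qed (intro summable_mult summable_exp_majorant)
  then obtain I J where I: "\<And>n. ((\<lambda>t. \<Sum>i<n. f x t * kiter f i t y) has_integral I n) {y..x}"
    and J: "((\<lambda>t. \<Sum>i. f x t * kiter f i t y) has_integral J) {y..x}"
    and "I \<longlonglongrightarrow> J"
    by (rule uniform_limit_integral)
       (auto intro!: continuous_on_sum continuous_on_Volterra_integrand continuous_on_kiter xy)
  moreover have "I = (\<lambda>n. \<Sum>i<n. kiter f (Suc i) x y)"
  proof
    fix n
    have "((\<lambda>t. \<Sum>i<n. f x t * kiter f i t y) has_integral
        (\<Sum>i<n. integral {y..x} (\<lambda>t. f x t * kiter f i t y))) {y..x}"
      by (intro has_integral_sum finite_lessThan integrable_integral integrable_continuous_interval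
          continuous_on_Volterra_integrand continuous_on_kiter xy)
    then show "I n = (\<Sum>i<n. kiter f (Suc i) x y)" using I[of n] by (simp add: has_integral_unique)
  qed
  ultimately have "(\<lambda>i. kiter f (Suc i) x y) sums J" by (simp add: sums_def)
  moreover have "((\<lambda>t. f x t * resolvent_kernel f t y) has_integral J) {y..x}"
  proof (rule has_integral_cong[THEN iffD1, OF _ J])
    fix t assume "t \<in> {y..x}"
    then show "(\<Sum>i. f x t * kiter f i t y) = f x t * resolvent_kernel f t y"
      unfolding resolvent_kernel_def by (intro suminf_mult summable_kiter ty)
  qed
  ultimately have "(\<lambda>i. kiter f (Suc i) x y) sums integral {y..x} (\<lambda>t. f x t * resolvent_kernel f t y)"
    by (simp add: integral_unique)
  then show ?thesis
    using suminf_split_head[OF summable_kiter[OF xy]]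
    by (simp add: resolvent_kernel_def sums_iff)
qed

end

lemma norm_integral_minus_Riemann_sum_le:
  fixes G :: "real \<Rightarrow> 'a::euclidean_space" and p c \<epsilon> :: real
  assumes c: "c > 0" and "j \<le> i"
    and G: "continuous_on {p + real j * c .. p + real i * c} G"
    and close: "\<And>k t. j < k \<Longrightarrow> k \<le> i \<Longrightarrow> t \<in> {p + real (k - 1) * c .. p + real k * c} \<Longrightarrow>
      norm (G t - G (p + real k * c)) \<le> \<epsilon>"
  shows "norm (integral {p + real j * c .. p + real i * c} G - c *\<^sub>R (\<Sum>k\<in>{j<..i}. G (p + real k * c)))
    \<le> real (i - j) * c * \<epsilon>"
  using \<open>j \<le> i\<close> G close
proof (induction i rule: dec_induct)
  case base
  then show ?case by simp
next
  case (step n)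
  define z where "z k = p + real k * c" for k
  have z_mono: "z k \<le> z k'" if "k \<le> k'" for k k' using c that by (simp add: z_def mult_right_mono)
  have z_jn: "z j \<le> z n" and z_n: "z n \<le> z (Suc n)" using step.hyps by (auto intro: z_mono)
  have G_jn: "continuous_on {z j..z (Suc n)} G" using step.prems by (simp add: z_def)
  have G_n: "continuous_on {z n..z (Suc n)} G"
    by (rule continuous_on_subset[OF G_jn]) (use z_jn in auto)
  have IH: "norm (integral {z j..z n} G - c *\<^sub>R (\<Sum>k\<in>{j<..n}. G (z k))) \<le> real (n - j) * c * \<epsilon>"
    unfolding z_def
  proof (rule step.IH)
    show "continuous_on {p + real j * c..p + real n * c} G"
      using continuous_on_subset[OF G_jn] z_n by (auto simp: z_def)
  qed (use step.prems in auto)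
  have "norm (integral {z n..z (Suc n)} (\<lambda>t. G t - G (z (Suc n)))) \<le> integral {z n..z (Suc n)} (\<lambda>t. \<epsilon>)"
    using step.hyps step.prems(2)[of "Suc n"]
    by (intro integral_norm_bound_integral integrable_continuous_interval continuous_intros G_n)
       (auto simp: z_def)
  also have "\<dots> = c * \<epsilon>" using c by (simp add: z_def algebra_simps)
  also have "integral {z n..z (Suc n)} (\<lambda>t. G t - G (z (Suc n)))
      = integral {z n..z (Suc n)} G - integral {z n..z (Suc n)} (\<lambda>t. G (z (Suc n)))"
    by (intro integral_diff integrable_continuous_interval G_n continuous_on_const)
  also have "integral {z n..z (Suc n)} (\<lambda>t. G (z (Suc n))) = c *\<^sub>R G (z (Suc n))"
    using z_n by (simp add: z_def algebra_simps)
  finally have last_cell: "norm (integral {z n..z (Suc n)} G - c *\<^sub>R G (z (Suc n))) \<le> c * \<epsilon>" .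
  have "integral {z j..z (Suc n)} G = integral {z j..z n} G + integral {z n..z (Suc n)} G"
    using z_jn z_n integrable_continuous_interval[OF G_jn]
    by (simp add: Henstock_Kurzweil_Integration.integral_combine)
  moreover have "{j<..Suc n} = insert (Suc n) {j<..n}" using step.hyps by auto
  ultimately have "integral {z j..z (Suc n)} G - c *\<^sub>R (\<Sum>k\<in>{j<..Suc n}. G (z k))
      = (integral {z j..z n} G - c *\<^sub>R (\<Sum>k\<in>{j<..n}. G (z k)))
        + (integral {z n..z (Suc n)} G - c *\<^sub>R G (z (Suc n)))"
    by (simp add: algebra_simps scaleR_add_right)
  then have "norm (integral {z j..z (Suc n)} G - c *\<^sub>R (\<Sum>k\<in>{j<..Suc n}. G (z k)))
      \<le> real (n - j) * c * \<epsilon> + c * \<epsilon>"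
    using IH last_cell by (metis add_mono norm_triangle_le)
  also have "\<dots> = real (Suc n - j) * c * \<epsilon>" using step.hyps by (simp add: of_nat_diff algebra_simps)
  finally show ?case by (simp add: z_def)
qed

text \<open>The new term e i also occurs on the right; h \<le> 1/2 lets it be absorbed.\<close>
lemma discrete_Gronwall_le:
  fixes e :: "nat \<Rightarrow> real" and h K :: real
  assumes h: "0 \<le> h" "h \<le> 1/2" and K: "0 \<le> K"
    and e_nonneg: "\<And>i. 0 \<le> e i"
    and e_le: "\<And>i. j < i \<Longrightarrow> i \<le> N \<Longrightarrow> e i \<le> K + h * (\<Sum>k\<in>{j<..i}. e k)"
  shows "j < i \<Longrightarrow> i \<le> N \<Longrightarrow> e i \<le> 2 * K * (1 + 2 * h) ^ i"
proof (induction i rule: less_induct)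
  case (less i)
  define q where "q = 1 + 2 * h"
  have geometric: "1 + 2 * h * (\<Sum>k<n. q ^ k) = q ^ n" for n
    by (induction n) (simp_all add: q_def algebra_simps)
  have "(\<Sum>k\<in>{j<..<i}. e k) \<le> (\<Sum>k\<in>{j<..<i}. 2 * K * q ^ k)"
    using less by (intro sum_mono) (auto simp: q_def)
  also have "\<dots> \<le> (\<Sum>k<i. 2 * K * q ^ k)"
    using K h by (intro sum_mono2) (auto simp: q_def)
  finally have previous: "(\<Sum>k\<in>{j<..<i}. e k) \<le> 2 * K * (\<Sum>k<i. q ^ k)"
    by (simp add: sum_distrib_left)
  have "{j<..i} = insert i {j<..<i}" using less.prems by auto
  then have "e i \<le> K + h * e i + h * (\<Sum>k\<in>{j<..<i}. e k)"
    using e_le[OF less.prems] by (simp add: algebra_simps)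
  moreover have "h * e i \<le> 1/2 * e i" using h e_nonneg by (intro mult_right_mono) auto
  moreover have "h * (\<Sum>k\<in>{j<..<i}. e k) \<le> h * (2 * K * (\<Sum>k<i. q ^ k))"
    using previous h by (intro mult_left_mono) auto
  ultimately have "e i \<le> 2 * K * (1 + 2 * h * (\<Sum>k<i. q ^ k))"
    by (simp add: algebra_simps)
  then have "e i \<le> 2 * K * q ^ i" by (simp only: geometric)
  then show ?case by (simp add: q_def)
qed

lemma mat_inv_eqI:
  assumes "A \<in> carrier_mat n n" "B \<in> carrier_mat n n" "A * B = 1\<^sub>m n" "B * A = 1\<^sub>m n"
  shows "mat_inv A = B"
  unfolding mat_inv_def
proof (rule the_equality)
  show "B \<in> carrier_mat (dim_row A) (dim_row A) \<and> inverts_mat A B \<and> inverts_mat B A"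
    using assms by (auto simp: inverts_mat_def)
next
  fix B' assume "B' \<in> carrier_mat (dim_row A) (dim_row A) \<and> inverts_mat A B' \<and> inverts_mat B' A"
  then have B': "B' \<in> carrier_mat n n" "B' * A = 1\<^sub>m n" using assms(1) by (auto simp: inverts_mat_def)
  have "B' = B' * (A * B)" using B' assms by simp
  also have "\<dots> = (B' * A) * B" by (rule assoc_mult_mat[symmetric, OF B'(1) assms(1,2)])
  also have "\<dots> = B" using B'(2) assms(2) by simp
  finally show "B' = B" .
qed

lemma mat_inv_if_det_nonzero:
  assumes A: "A \<in> carrier_mat n n" and "det A \<noteq> 0"
  shows "invertible_mat A" "mat_inv A \<in> carrier_mat n n" "A * mat_inv A = 1\<^sub>m n"
proof -
  have "A \<in> Units (ring_mat TYPE(complex) n ())"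
    by (rule det_non_zero_imp_unit[OF assms])
  then obtain B where B: "B \<in> carrier_mat n n" "A * B = 1\<^sub>m n" "B * A = 1\<^sub>m n"
    unfolding Units_def ring_mat_simps by auto
  then have "mat_inv A = B" by (intro mat_inv_eqI[OF A])
  with A B show "invertible_mat A" "mat_inv A \<in> carrier_mat n n" "A * mat_inv A = 1\<^sub>m n"
    by (auto simp: invertible_mat_def inverts_mat_def square_mat.simps)
qed

lemma dz_pos: "a < b \<Longrightarrow> 1 \<le> N \<Longrightarrow> 0 < dz a b N"
  by (simp add: dz_def)

lemma of_nat_mult_dz: "1 \<le> N \<Longrightarrow> real N * dz a b N = b - a"
  by (simp add: dz_def)

lemma dz_tendsto_0: "(\<lambda>N. dz a b N) \<longlonglongrightarrow> 0"
  unfolding dz_def by (rule lim_const_over_n)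

lemma grid_mono: "a < b \<Longrightarrow> k \<le> k' \<Longrightarrow> grid a b N k \<le> grid a b N k'"
  unfolding grid_def dz_def by (intro add_left_mono mult_right_mono divide_nonneg_nonneg) auto

lemma grid_mem: "a < b \<Longrightarrow> 1 \<le> N \<Longrightarrow> k \<le> N \<Longrightarrow> grid a b N k \<in> {a..b}"
  using grid_mono[of a b 0 k N] grid_mono[of a b k N N] by (auto simp: grid_def dz_def)

lemma IdMinusF_carrier: "IdMinusF a b f N \<in> carrier_mat (N + 1) (N + 1)"
  unfolding IdMinusF_def Fmat_def by auto

lemma IdMinusF_index:
  "i \<le> N \<Longrightarrow> k \<le> N \<Longrightarrow> IdMinusF a b f N $$ (i, k) = (if i = k then 1 else 0) -
    complex_of_real (dz a b N) * (if k \<le> i then f (grid a b N i) (grid a b N k) else 0)"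
  unfolding IdMinusF_def Fmat_def by auto

lemma IdMinusF_inverse:
  assumes "\<And>k. k \<le> N \<Longrightarrow> 1 - complex_of_real (dz a b N) * f (grid a b N k) (grid a b N k) \<noteq> 0"
  shows "invertible_mat (IdMinusF a b f N)"
    and "mat_inv (IdMinusF a b f N) \<in> carrier_mat (N + 1) (N + 1)"
    and "IdMinusF a b f N * mat_inv (IdMinusF a b f N) = 1\<^sub>m (N + 1)"
proof -
  have "det (IdMinusF a b f N) = prod_list (diag_mat (IdMinusF a b f N))"
    by (rule det_lower_triangular[OF _ IdMinusF_carrier]) (auto simp: IdMinusF_index)
  also have "\<dots> \<noteq> 0"
    using assms IdMinusF_carrier[of a b f N]
    by (auto simp: diag_mat_def prod_list_zero_iff IdMinusF_index)
  finally have "det (IdMinusF a b f N) \<noteq> 0" .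
  from mat_inv_if_det_nonzero[OF IdMinusF_carrier this]
  show "invertible_mat (IdMinusF a b f N)"
    and "mat_inv (IdMinusF a b f N) \<in> carrier_mat (N + 1) (N + 1)"
    and "IdMinusF a b f N * mat_inv (IdMinusF a b f N) = 1\<^sub>m (N + 1)" by simp_all
qed

lemma right_inverse_IdMinusF_entry:
  assumes B: "B \<in> carrier_mat (N + 1) (N + 1)" and AB: "IdMinusF a b f N * B = 1\<^sub>m (N + 1)"
    and ij: "i \<le> N" "j \<le> N"
  shows "B $$ (i, j) = (if i = j then 1 else 0) +
    complex_of_real (dz a b N) * (\<Sum>k\<le>i. f (grid a b N i) (grid a b N k) * B $$ (k, j))"
proof -
  let ?c = "complex_of_real (dz a b N)" and ?g = "\<lambda>k. f (grid a b N i) (grid a b N k)"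
  have "(if i = j then 1 else 0) = (IdMinusF a b f N * B) $$ (i, j)"
    unfolding AB using ij by simp
  also have "\<dots> = (\<Sum>k<N + 1. IdMinusF a b f N $$ (i, k) * B $$ (k, j))"
    using B IdMinusF_carrier[of a b f N] ij
    by (simp add: index_mult_mat scalar_prod_def lessThan_atLeast0)
  also have "\<dots> = (\<Sum>k<N + 1. (if i = k then B $$ (k, j) else 0)
      - ?c * (if k \<le> i then ?g k * B $$ (k, j) else 0))"
    using ij by (intro sum.cong) (auto simp: IdMinusF_index algebra_simps)
  also have "\<dots> = B $$ (i, j) - ?c * (\<Sum>k\<le>i. ?g k * B $$ (k, j))"
  proof -
    have "(\<Sum>k<N + 1. if i = k then B $$ (k, j) else 0) = B $$ (i, j)"
      using ij by (simp add: sum.delta)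
    moreover have "(\<Sum>k<N + 1. if k \<le> i then ?g k * B $$ (k, j) else 0) = (\<Sum>k\<le>i. ?g k * B $$ (k, j))"
      by (rule sum.mono_neutral_cong_right) (use ij in auto)
    ultimately show ?thesis by (simp only: sum_subtractf sum_distrib_left[symmetric])
  qed
  finally show ?thesis by (simp add: algebra_simps)
qed

locale Volterra_discretization = bounded_continuous_kernel +
  assumes a_less_b: "a < b"
begin

definition admissible :: "nat \<Rightarrow> bool" where
  "admissible N \<longleftrightarrow> 1 \<le> N \<and> dz a b N * M \<le> 1/2"

definition discrete_resolvent :: "nat \<Rightarrow> nat \<Rightarrow> nat \<Rightarrow> complex" where
  "discrete_resolvent N i j = mat_inv (IdMinusF a b f N) $$ (i, j) / complex_of_real (dz a b N)"

definition quadrature_defect :: "nat \<Rightarrow> nat \<Rightarrow> nat \<Rightarrow> complex" where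
  "quadrature_defect N i j = resolvent_kernel f (grid a b N i) (grid a b N j)
    - f (grid a b N i) (grid a b N j)
    - complex_of_real (dz a b N) * (\<Sum>k\<in>{j<..i}.
        f (grid a b N i) (grid a b N k) * resolvent_kernel f (grid a b N k) (grid a b N j))"

lemma eventually_admissible: "\<forall>\<^sub>F N in sequentially. admissible N"
proof -
  have "\<forall>\<^sub>F N in sequentially. dz a b N < 1 / (2 * M)"
    using order_tendstoD(2)[OF dz_tendsto_0, of "1 / (2 * M)"] bound_pos by simp
  then show ?thesis using eventually_ge_at_top[of 1]
    by eventually_elim (use bound_pos in \<open>auto simp: admissible_def field_simps\<close>)
qed

lemma norm_kernel_grid_le:
  "1 \<le> N \<Longrightarrow> i \<le> N \<Longrightarrow> k \<le> N \<Longrightarrow> norm (f (grid a b N i) (grid a b N k)) \<le> M"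
  using a_less_b by (intro norm_kernel_le grid_mem)

lemma norm_dz_kernel_grid_le:
  assumes "admissible N" "i \<le> N" "k \<le> N"
  shows "norm (complex_of_real (dz a b N) * f (grid a b N i) (grid a b N k)) \<le> dz a b N * M"
proof -
  have "0 < dz a b N" using assms a_less_b by (simp add: admissible_def dz_pos)
  then show ?thesis
    using assms norm_kernel_grid_le[of N i k]
    by (simp add: norm_mult admissible_def mult_left_mono)
qed

lemma IdMinusF_mat_inv:
  assumes "admissible N"
  shows "invertible_mat (IdMinusF a b f N)"
    and "mat_inv (IdMinusF a b f N) \<in> carrier_mat (N + 1) (N + 1)"
    and "IdMinusF a b f N * mat_inv (IdMinusF a b f N) = 1\<^sub>m (N + 1)"
proof -
  have diagonal: "1 - complex_of_real (dz a b N) * f (grid a b N k) (grid a b N k) \<noteq> 0"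
    if "k \<le> N" for k
    using norm_dz_kernel_grid_le[OF assms that that] assms by (auto simp: admissible_def)
  show "invertible_mat (IdMinusF a b f N)"
    and "mat_inv (IdMinusF a b f N) \<in> carrier_mat (N + 1) (N + 1)"
    and "IdMinusF a b f N * mat_inv (IdMinusF a b f N) = 1\<^sub>m (N + 1)"
    using IdMinusF_inverse[of N a b f, OF diagonal] by simp_all
qed

lemma mat_inv_IdMinusF_entry:
  assumes "admissible N" "i \<le> N" "j \<le> N"
  shows "mat_inv (IdMinusF a b f N) $$ (i, j) = (if i = j then 1 else 0) +
    complex_of_real (dz a b N) * (\<Sum>k\<le>i. f (grid a b N i) (grid a b N k) * mat_inv (IdMinusF a b f N) $$ (k, j))"
  using assms by (intro right_inverse_IdMinusF_entry IdMinusF_mat_inv)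

lemma mat_inv_IdMinusF_above_diagonal:
  assumes N: "admissible N" and "j \<le> N"
  shows "k < j \<Longrightarrow> mat_inv (IdMinusF a b f N) $$ (k, j) = 0"
proof (induction k rule: less_induct)
  case (less k)
  let ?B = "mat_inv (IdMinusF a b f N)"
  let ?w = "complex_of_real (dz a b N) * f (grid a b N k) (grid a b N k)"
  have k: "k \<le> N" using less.prems \<open>j \<le> N\<close> by simp
  have "(\<Sum>l\<le>k. f (grid a b N k) (grid a b N l) * ?B $$ (l, j))
      = f (grid a b N k) (grid a b N k) * ?B $$ (k, j)"
    using less by (simp add: lessThan_Suc_atMost[symmetric])
  then have "(1 - ?w) * ?B $$ (k, j) = 0"
    using mat_inv_IdMinusF_entry[OF N k \<open>j \<le> N\<close>] less.prems by (simp add: algebra_simps)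
  moreover have "1 - ?w \<noteq> 0"
    using norm_dz_kernel_grid_le[OF N k k] N by (auto simp: admissible_def)
  ultimately show ?case by simp
qed

lemma norm_mat_inv_IdMinusF_diagonal_minus_1:
  assumes N: "admissible N" and j: "j \<le> N"
  shows "norm (mat_inv (IdMinusF a b f N) $$ (j, j) - 1) \<le> 2 * dz a b N * M"
proof -
  define \<beta> where "\<beta> = mat_inv (IdMinusF a b f N) $$ (j, j)"
  define w where "w = complex_of_real (dz a b N) * f (grid a b N j) (grid a b N j)"
  have w: "norm w \<le> dz a b N * M" "dz a b N * M \<le> 1/2"
    using norm_dz_kernel_grid_le[OF N j j] N by (auto simp: w_def admissible_def)
  have "\<beta> - 1 = w * \<beta>"
    using mat_inv_IdMinusF_entry[OF N j j] mat_inv_IdMinusF_above_diagonal[OF N j]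
    by (simp add: lessThan_Suc_atMost[symmetric] \<beta>_def w_def algebra_simps)
  then have \<beta>_minus_1: "norm (\<beta> - 1) \<le> dz a b N * M * norm \<beta>"
    using w by (simp add: norm_mult mult_right_mono)
  have "norm \<beta> \<le> 1 + norm (\<beta> - 1)" by (metis norm_triangle_sub norm_one add.commute)
  also have "\<dots> \<le> 1 + 1/2 * norm \<beta>"
    using \<beta>_minus_1 mult_right_mono[OF w(2) norm_ge_zero[of \<beta>]] by simp
  finally have "norm \<beta> \<le> 2" by simp
  moreover have "0 < dz a b N" using N a_less_b by (simp add: admissible_def dz_pos)
  ultimately have "dz a b N * M * norm \<beta> \<le> dz a b N * M * 2"
    using bound_pos by (intro mult_left_mono) auto
  then show ?thesis using \<beta>_minus_1 by (simp add: \<beta>_def)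
qed

text \<open>Column j of the inverse, scaled by 1/dz, solves the right-endpoint rectangle-rule
  discretisation of the resolvent equation (with weight at k = j given by the diagonal entry).\<close>
lemma discrete_resolvent_recursion:
  assumes N: "admissible N" and ji: "j < i" "i \<le> N"
  shows "discrete_resolvent N i j = f (grid a b N i) (grid a b N j) * mat_inv (IdMinusF a b f N) $$ (j, j)
    + complex_of_real (dz a b N) * (\<Sum>k\<in>{j<..i}. f (grid a b N i) (grid a b N k) * discrete_resolvent N k j)"
proof -
  let ?B = "mat_inv (IdMinusF a b f N)" and ?c = "complex_of_real (dz a b N)"
  let ?g = "\<lambda>k. f (grid a b N i) (grid a b N k)"
  have c: "?c \<noteq> 0" using N a_less_b dz_pos[of a b N] by (auto simp: admissible_def)
  have "(\<Sum>k\<le>i. ?g k * ?B $$ (k, j)) = (\<Sum>k\<in>{j..i}. ?g k * ?B $$ (k, j))"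
    using mat_inv_IdMinusF_above_diagonal[OF N, of j] ji
    by (intro sum.mono_neutral_cong_right) auto
  also have "\<dots> = ?g j * ?B $$ (j, j) + (\<Sum>k\<in>{j<..i}. ?g k * ?B $$ (k, j))"
  proof -
    have "{j..i} = insert j {j<..i}" using ji by auto
    then show ?thesis by simp
  qed
  finally have "?B $$ (i, j) = ?c * (?g j * ?B $$ (j, j) + (\<Sum>k\<in>{j<..i}. ?g k * ?B $$ (k, j)))"
    using mat_inv_IdMinusF_entry[OF N ji(2), of j] ji by simp
  then show ?thesis
    using c by (simp add: discrete_resolvent_def sum_distrib_left sum_divide_distrib field_simps)
qed


lemma norm_quadrature_defect_le:
  assumes N: "1 \<le> N" and ji: "j < i" "i \<le> N" and "0 \<le> \<eta>"
    and close: "\<And>k t. j < k \<Longrightarrow> k \<le> i \<Longrightarrow> t \<in> {grid a b N (k - 1)..grid a b N k} \<Longrightarrow>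
      norm (f (grid a b N i) t * resolvent_kernel f t (grid a b N j)
        - f (grid a b N i) (grid a b N k) * resolvent_kernel f (grid a b N k) (grid a b N j)) \<le> \<eta>"
  shows "norm (quadrature_defect N i j) \<le> (b - a) * \<eta>"
proof -
  let ?z = "grid a b N" and ?c = "dz a b N"
  define G where "G = (\<lambda>t. f (?z i) t * resolvent_kernel f t (?z j))"
  have c: "0 < ?c" using N a_less_b by (simp add: dz_pos)
  have T: "(?z i, ?z j) \<in> lower_triangle a b"
    using grid_mem[OF a_less_b N] grid_mono[OF a_less_b, of j i N] ji by auto
  have G_cont: "continuous_on {?z j..?z i} G"
    unfolding G_def by (rule continuous_on_Volterra_integrand[OF continuous_on_resolvent_kernel T])
  have G_close: "norm (G t - G (?z k)) \<le> \<eta>" if "j < k" "k \<le> i" "t \<in> {?z (k - 1)..?z k}" for k t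
    using close[OF that] by (simp add: G_def)
  have "quadrature_defect N i j = integral {?z j..?z i} G - ?c *\<^sub>R (\<Sum>k\<in>{j<..i}. G (?z k))"
    using resolvent_equation[OF T] by (simp add: quadrature_defect_def G_def scaleR_conv_of_real)
  also have "norm \<dots> \<le> real (i - j) * ?c * \<eta>"
    unfolding grid_def
    by (rule norm_integral_minus_Riemann_sum_le[OF c])
       (use ji G_cont G_close in \<open>auto simp: grid_def\<close>)
  also have "\<dots> \<le> real N * ?c * \<eta>"
    using ji c \<open>0 \<le> \<eta>\<close> by (intro mult_right_mono) auto
  also have "\<dots> = (b - a) * \<eta>" using of_nat_mult_dz[OF N] by simp
  finally show ?thesis .
qed

text \<open>The defect is a rectangle-rule error for the integrand (x,t,y) \<mapsto> f(x,t) r(t,y),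
  which is uniformly continuous on the compact set a \<le> y \<le> t \<le> x \<le> b.\<close>
lemma eventually_norm_quadrature_defect_le:
  assumes "0 < \<epsilon>"
  shows "\<forall>\<^sub>F N in sequentially. \<forall>i j. j < i \<and> i \<le> N \<longrightarrow> norm (quadrature_defect N i j) \<le> \<epsilon>"
proof -
  define S where "S = {(x, t, y). a \<le> y \<and> y \<le> t \<and> t \<le> x \<and> x \<le> b}"
  define H where "H p = f (fst p) (fst (snd p)) * resolvent_kernel f (fst (snd p)) (snd (snd p))"
    for p :: "real \<times> real \<times> real"
  have "S = ({a..b} \<times> {a..b} \<times> {a..b}) \<inter> {p. snd (snd p) \<le> fst (snd p)} \<inter> {p. fst (snd p) \<le> fst p}"
    by (auto simp: S_def)
  then have "compact S"
    by (simp only:) (intro compact_Int_closed compact_Times compact_Icc closed_Collect_le continuous_intros)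
  moreover have "continuous_on S H"
  proof -
    have sub: "(\<lambda>p. (fst p, fst (snd p))) ` S \<subseteq> {a..b} \<times> {a..b}"
      "(\<lambda>p. (fst (snd p), snd (snd p))) ` S \<subseteq> lower_triangle a b"
      by (auto simp: S_def)
    have cont: "continuous_on S (\<lambda>p. (fst p, fst (snd p)))"
      "continuous_on S (\<lambda>p. (fst (snd p), snd (snd p)))"
      by (intro continuous_intros)+
    from continuous_on_compose2[OF continuous_kernel cont(1) sub(1)]
      continuous_on_compose2[OF continuous_on_resolvent_kernel cont(2) sub(2)]
    have "continuous_on S (\<lambda>p. f (fst p) (fst (snd p)))"
      "continuous_on S (\<lambda>p. resolvent_kernel f (fst (snd p)) (snd (snd p)))"
      by (simp_all add: case_prod_beta)
    then show ?thesis unfolding H_def by (rule continuous_on_mult)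
  qed
  ultimately have "uniformly_continuous_on S H" by (rule compact_uniformly_continuous[rotated])
  moreover have "0 < \<epsilon> / (b - a)" using assms a_less_b by simp
  ultimately obtain \<delta> where "0 < \<delta>"
    and \<delta>: "\<And>p p'. p \<in> S \<Longrightarrow> p' \<in> S \<Longrightarrow> dist p' p < \<delta> \<Longrightarrow> dist (H p') (H p) < \<epsilon> / (b - a)"
    unfolding uniformly_continuous_on_def by blast
  have "\<forall>\<^sub>F N in sequentially. dz a b N < \<delta>"
    using order_tendstoD(2)[OF dz_tendsto_0 \<open>0 < \<delta>\<close>] .
  then show ?thesis using eventually_ge_at_top[of 1]
  proof eventually_elim
    case (elim N)
    let ?z = "grid a b N"
    have close: "norm (f (?z i) t * resolvent_kernel f t (?z j)
        - f (?z i) (?z k) * resolvent_kernel f (?z k) (?z j)) \<le> \<epsilon> / (b - a)"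
      if "j < k" "k \<le> i" "i \<le> N" "t \<in> {?z (k - 1)..?z k}" for i j k t
    proof -
      have "?z k - ?z (k - 1) = dz a b N" using that by (simp add: grid_def of_nat_diff algebra_simps)
      then have "\<bar>t - ?z k\<bar> < \<delta>" using that elim by auto
      then have "dist (?z i, t, ?z j) (?z i, ?z k, ?z j) < \<delta>"
        by (simp add: dist_Pair_Pair dist_real_def)
      moreover have "?z j \<le> ?z (k - 1)" "?z k \<le> ?z i"
        using that a_less_b by (auto intro: grid_mono)
      moreover have "?z j \<in> {a..b}" "?z i \<in> {a..b}"
        using that grid_mem[OF a_less_b elim(2)] by auto
      ultimately show ?thesis
        using \<delta>[of "(?z i, ?z k, ?z j)" "(?z i, t, ?z j)"] that by (auto simp: S_def H_def dist_norm)
    qed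
    show ?case
    proof (intro allI impI)
      fix i j assume "j < i \<and> i \<le> N"
      then have "norm (quadrature_defect N i j) \<le> (b - a) * (\<epsilon> / (b - a))"
        using elim close \<open>0 < \<epsilon> / (b - a)\<close> by (intro norm_quadrature_defect_le) auto
      then show "norm (quadrature_defect N i j) \<le> \<epsilon>" using a_less_b by simp
    qed
  qed
qed

lemma norm_discrete_resolvent_minus_resolvent_le:
  assumes N: "admissible N" and ji: "j < i" "i \<le> N" and "0 \<le> \<delta>"
    and defect: "\<And>l. j < l \<Longrightarrow> l \<le> N \<Longrightarrow> norm (quadrature_defect N l j) \<le> \<delta>"
  shows "norm (discrete_resolvent N i j - resolvent_kernel f (grid a b N i) (grid a b N j))
    \<le> 2 * (2 * M * M * dz a b N + \<delta>) * exp (2 * M * (b - a))"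
proof -
  let ?z = "grid a b N" and ?c = "dz a b N"
  define d where "d l = discrete_resolvent N l j - resolvent_kernel f (?z l) (?z j)" for l
  define K where "K = 2 * M * M * ?c + \<delta>"
  have c: "0 < ?c" "?c * M \<le> 1/2" using N a_less_b by (auto simp: admissible_def dz_pos)
  have N1: "1 \<le> N" using N by (simp add: admissible_def)
  have d_le: "norm (d l) \<le> K + ?c * M * (\<Sum>k\<in>{j<..l}. norm (d k))" if l: "j < l" "l \<le> N" for l
  proof -
    let ?g = "\<lambda>k. f (?z l) (?z k)"
    have "d l = ?g j * (mat_inv (IdMinusF a b f N) $$ (j, j) - 1)
        + complex_of_real ?c * (\<Sum>k\<in>{j<..l}. ?g k * d k) - quadrature_defect N l j"
      using discrete_resolvent_recursion[OF N l]
      by (simp add: d_def quadrature_defect_def algebra_simps sum_subtractf)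
    then have "norm (d l) \<le> norm (?g j * (mat_inv (IdMinusF a b f N) $$ (j, j) - 1))
        + norm (complex_of_real ?c * (\<Sum>k\<in>{j<..l}. ?g k * d k)) + norm (quadrature_defect N l j)"
      by (simp only:) (rule order_trans[OF norm_triangle_ineq4 add_mono[OF norm_triangle_ineq order_refl]])
    also have "\<dots> \<le> M * (2 * ?c * M) + ?c * (M * (\<Sum>k\<in>{j<..l}. norm (d k))) + \<delta>"
    proof (rule add_mono[OF add_mono])
      show "norm (?g j * (mat_inv (IdMinusF a b f N) $$ (j, j) - 1)) \<le> M * (2 * ?c * M)"
        unfolding norm_mult using N1 l bound_pos
        by (intro mult_mono norm_kernel_grid_le norm_mat_inv_IdMinusF_diagonal_minus_1[OF N]) auto
      have "norm (\<Sum>k\<in>{j<..l}. ?g k * d k) \<le> (\<Sum>k\<in>{j<..l}. norm (?g k) * norm (d k))"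
        unfolding norm_mult[symmetric] by (rule norm_sum)
      also have "\<dots> \<le> (\<Sum>k\<in>{j<..l}. M * norm (d k))"
        using N1 l by (intro sum_mono mult_right_mono norm_kernel_grid_le) auto
      finally have "norm (\<Sum>k\<in>{j<..l}. ?g k * d k) \<le> M * (\<Sum>k\<in>{j<..l}. norm (d k))"
        by (simp add: sum_distrib_left)
      then show "norm (complex_of_real ?c * (\<Sum>k\<in>{j<..l}. ?g k * d k))
          \<le> ?c * (M * (\<Sum>k\<in>{j<..l}. norm (d k)))"
        unfolding norm_mult norm_of_real abs_of_pos[OF c(1)] using c by (intro mult_left_mono) auto
      show "norm (quadrature_defect N l j) \<le> \<delta>" using l by (rule defect)
    qed
    finally show ?thesis by (simp add: K_def algebra_simps)
  qed
  have "(1 + 2 * (?c * M)) ^ i \<le> (1 + 2 * (?c * M)) ^ N"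
    using ji c bound_pos by (intro power_increasing) auto
  also have "\<dots> \<le> exp (2 * (?c * M)) ^ N"
    using c bound_pos by (intro power_mono) (auto simp: exp_ge_add_one_self add.commute)
  also have "\<dots> = exp (real N * (2 * (?c * M)))" by (rule exp_of_nat_mult[symmetric])
  also have "real N * (2 * (?c * M)) = 2 * M * (real N * ?c)" by (simp add: algebra_simps)
  finally have growth: "(1 + 2 * (?c * M)) ^ i \<le> exp (2 * M * (b - a))"
    using of_nat_mult_dz[OF N1] by simp
  have "norm (d i) \<le> 2 * K * (1 + 2 * (?c * M)) ^ i"
    using c bound_pos \<open>0 \<le> \<delta>\<close> d_le ji
    by (intro discrete_Gronwall_le[where j = j and N = N]) (auto simp: K_def)
  also have "\<dots> \<le> 2 * K * exp (2 * M * (b - a))"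
    using growth c bound_pos \<open>0 \<le> \<delta>\<close> by (intro mult_left_mono) (auto simp: K_def)
  finally show ?thesis by (simp add: d_def K_def)
qed

lemma discrete_resolvent_uniform_convergence:
  assumes "0 < \<epsilon>"
  shows "\<forall>\<^sub>F N in sequentially. \<forall>i j. j < i \<and> i \<le> N \<longrightarrow>
    norm (discrete_resolvent N i j - resolvent_kernel f (grid a b N i) (grid a b N j)) \<le> \<epsilon>"
proof -
  define C where "C = exp (2 * M * (b - a))"
  define \<delta> where "\<delta> = \<epsilon> / (4 * C)"
  have C: "0 < C" and \<delta>: "0 < \<delta>" using assms by (simp_all add: C_def \<delta>_def)
  have "\<forall>\<^sub>F N in sequentially. dz a b N < \<epsilon> / (8 * M * M * C)"
    using order_tendstoD(2)[OF dz_tendsto_0] assms bound_pos C by simp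
  then show ?thesis
    using eventually_admissible eventually_norm_quadrature_defect_le[OF \<delta>]
  proof eventually_elim
    case (elim N)
    have "4 * M * M * C * dz a b N \<le> 4 * M * M * C * (\<epsilon> / (8 * M * M * C))"
      using elim(1) bound_pos C by (intro mult_left_mono) auto
    also have "\<dots> = \<epsilon> / 2" using bound_pos C by (simp add: field_simps)
    finally have dz_small: "4 * M * M * C * dz a b N \<le> \<epsilon> / 2" .
    show ?case
    proof (intro allI impI)
      fix i j assume "j < i \<and> i \<le> N"
      then have "norm (discrete_resolvent N i j - resolvent_kernel f (grid a b N i) (grid a b N j))
          \<le> 2 * (2 * M * M * dz a b N + \<delta>) * C"
        unfolding C_def using elim \<delta> by (intro norm_discrete_resolvent_minus_resolvent_le) auto
      also have "\<dots> = 4 * M * M * C * dz a b N + \<epsilon> / 2"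
        using C by (simp add: \<delta>_def field_simps)
      finally show "norm (discrete_resolvent N i j - resolvent_kernel f (grid a b N i) (grid a b N j)) \<le> \<epsilon>"
        using dz_small by simp
    qed
  qed
qed

lemma tendsto_discrete_resolvent:
  assumes ij: "\<And>N. 1 \<le> N \<Longrightarrow> j N < i N \<and> i N \<le> N"
    and x: "(\<lambda>N. grid a b N (i N)) \<longlonglongrightarrow> x" and y: "(\<lambda>N. grid a b N (j N)) \<longlonglongrightarrow> y"
  shows "(\<lambda>N. discrete_resolvent N (i N) (j N)) \<longlonglongrightarrow> resolvent_kernel f x y"
proof -
  let ?p = "\<lambda>N. (grid a b N (i N), grid a b N (j N))"
  have in_triangle: "\<forall>\<^sub>F N in sequentially. ?p N \<in> lower_triangle a b"
    using eventually_ge_at_top[of 1]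
  proof eventually_elim
    case (elim N)
    with ij[OF elim] a_less_b show ?case
      by (auto intro: grid_mono grid_mem[THEN atLeastAtMost_iff[THEN iffD1], THEN conjunct1]
          grid_mem[THEN atLeastAtMost_iff[THEN iffD1], THEN conjunct2])
  qed
  have p: "?p \<longlonglongrightarrow> (x, y)" by (intro tendsto_Pair x y)
  have "(x, y) \<in> lower_triangle a b"
    by (rule Lim_in_closed_set[OF compact_imp_closed[OF compact_lower_triangle] in_triangle _ p]) simp
  from continuous_on_tendsto_compose[OF continuous_on_resolvent_kernel p this in_triangle]
  have r: "(\<lambda>N. resolvent_kernel f (grid a b N (i N)) (grid a b N (j N))) \<longlonglongrightarrow> resolvent_kernel f x y"
    by simp
  have "(\<lambda>N. discrete_resolvent N (i N) (j N) - resolvent_kernel f (grid a b N (i N)) (grid a b N (j N)))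
      \<longlonglongrightarrow> 0"
  proof (rule tendsto_iff[THEN iffD2], intro allI impI)
    fix \<epsilon> :: real assume "0 < \<epsilon>"
    then have "0 < \<epsilon> / 2" by simp
    from discrete_resolvent_uniform_convergence[OF this] eventually_ge_at_top[of 1]
    show "\<forall>\<^sub>F N in sequentially.
      dist (discrete_resolvent N (i N) (j N) - resolvent_kernel f (grid a b N (i N)) (grid a b N (j N))) 0 < \<epsilon>"
    proof eventually_elim
      case (elim N)
      then show ?case using ij[OF elim(2)] \<open>0 < \<epsilon>\<close>
        by (fastforce simp: dist_norm)
    qed
  qed
  from tendsto_add[OF this r] show ?thesis by simp
qed

end

theorem mainTheorem1:
  fixes a b :: real and f :: "real \<Rightarrow> real \<Rightarrow> complex"
  assumes "a < b"
    and "continuous_on ({a..b} \<times> {a..b}) (\<lambda>(x, y). f x y)"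
  shows "(\<forall>\<^sub>F N in sequentially. invertible_mat (IdMinusF a b f N)) \<and>
    (\<forall>x y. \<forall>i j :: nat \<Rightarrow> nat.
       a \<le> y \<and> y < x \<and> x \<le> b \<and>
       (\<forall>N\<ge>1. j N < i N \<and> i N \<le> N) \<and>
       (\<lambda>N. grid a b N (i N)) \<longlonglongrightarrow> x \<and>
       (\<lambda>N. grid a b N (j N)) \<longlonglongrightarrow> y \<longrightarrow>
       (\<lambda>N. mat_inv (IdMinusF a b f N) $$ (i N, j N) / complex_of_real (dz a b N))
         \<longlonglongrightarrow> resolvent_kernel f x y)"
proof -
  have "bounded ((\<lambda>(x, y). f x y) ` ({a..b} \<times> {a..b}))"
    by (intro compact_imp_bounded compact_continuous_image assms(2) compact_Times compact_Icc)
  then obtain M where "0 < M" "\<forall>x\<in>{a..b}. \<forall>y\<in>{a..b}. norm (f x y) \<le> M"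
    unfolding bounded_pos by fastforce
  then interpret Volterra_discretization a b f M
    using assms by unfold_locales auto
  show ?thesis
    using eventually_mono[OF eventually_admissible IdMinusF_mat_inv(1)] tendsto_discrete_resolvent
    by (auto simp: discrete_resolvent_def)
qed

end
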